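(* For every $n\ge 1$, the path $P_n$ on $n$ vertices satisfies $\phi(P_n)<0.81\cdot 6^{n/4}$.
   Context: A subset $F$ of vertices of a graph $G$ is a dissociation set if $G[F]$ has maximum degree at most $1$; a maximal dissociation set is one not properly contained in another dissociation set; $\phi(G)$ is the number of maximal dissociation sets of $G$. *)

theory Defs
  imports Complex_Main
begin

text \<open>A simple graph is given by a vertex set V and a symmetric irreflexive
adjacency relation E (only used on V).\<close>

definition dissociation_set :: "'a set \<Rightarrow> ('a \<Rightarrow> 'a \<Rightarrow> bool) \<Rightarrow> 'a set \<Rightarrow> bool" where
  "dissociation_set V E F \<longleftrightarrow> F \<subseteq> V \<and> (\<forall>v\<in>F. card {u\<in>F. E v u} \<le> 1)"

definition maximal_dissociation_set :: "'a set \<Rightarrow> ('a \<Rightarrow> 'a \<Rightarrow> bool) \<Rightarrow> 'a set \<Rightarrow> bool" where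
  "maximal_dissociation_set V E F \<longleftrightarrow>
     dissociation_set V E F \<and> (\<forall>F'. dissociation_set V E F' \<and> F \<subseteq> F' \<longrightarrow> F' = F)"

definition num_max_dissociation_sets :: "'a set \<Rightarrow> ('a \<Rightarrow> 'a \<Rightarrow> bool) \<Rightarrow> nat" where
  "num_max_dissociation_sets V E = card {F. maximal_dissociation_set V E F}"

definition path_vertices :: "nat \<Rightarrow> nat set" where
  "path_vertices n = {0..<n}"

definition path_adj :: "nat \<Rightarrow> nat \<Rightarrow> bool" where
  "path_adj i j \<longleftrightarrow> i = Suc j \<or> j = Suc i"

end

theory Submission
  imports Defs
begin

(* A dissociation set of P_n is a subset of {0..<n} without three consecutive vertices, and it is
   maximal iff every missing vertex completes such a triple. Cutting a maximal set at a missing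
   vertex m leaves a maximal set of P_m, since no blocking triple of a vertex before m reaches
   past m. Sort the maximal sets by their end: last vertex missing, last vertex alone, last two
   vertices present. Cutting at the last missing vertex (n-1, n-2 or n-3) embeds these classes into
   end_pair (n-1), end_single (n-2) and end_pair (n-2), and all maximal sets of P_(n-3); the
   blocking triples of n-1 resp. n-2 put n-3 into the cut set.
   For mu = 39/25 we have mu^2 >= 2 and mu^3 >= 3, so each class has at most mu^n/4 members once
   n >= 4; hence phi(P_n) <= 3 mu^n/4 < 0.81 mu^n, and mu^4 < 6. *)

definition triple_free :: "nat set \<Rightarrow> bool" where
  "triple_free F \<longleftrightarrow> (\<forall>w. \<not> {w, Suc w, Suc (Suc w)} \<subseteq> F)"

lemma triple_free_subset: "triple_free F \<Longrightarrow> G \<subseteq> F \<Longrightarrow> triple_free G"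
  unfolding triple_free_def by blast

lemma path_neighbours:
  "{u \<in> F. path_adj v u} =
     (if Suc v \<in> F then {Suc v} else {}) \<union> (if 0 < v \<and> v - 1 \<in> F then {v - 1} else {})"
  unfolding path_adj_def by (cases v) auto

lemma card_path_neighbours_le_1:
  "card {u \<in> F. path_adj v u} \<le> 1 \<longleftrightarrow> \<not> (0 < v \<and> v - 1 \<in> F \<and> Suc v \<in> F)"
  by (simp add: path_neighbours)

lemma dissociation_set_path_iff:
  "dissociation_set {0..<n} path_adj F \<longleftrightarrow> F \<subseteq> {0..<n} \<and> triple_free F"
proof -
  have "(\<forall>v\<in>F. \<not> (0 < v \<and> v - 1 \<in> F \<and> Suc v \<in> F)) \<longleftrightarrow> triple_free F"
  proof
    assume middle: "\<forall>v\<in>F. \<not> (0 < v \<and> v - 1 \<in> F \<and> Suc v \<in> F)"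
    show "triple_free F"
      unfolding triple_free_def
    proof (intro allI notI)
      fix w
      assume "{w, Suc w, Suc (Suc w)} \<subseteq> F"
      with middle[rule_format, of "Suc w"] show False
        by simp
    qed
  next
    assume "triple_free F"
    show "\<forall>v\<in>F. \<not> (0 < v \<and> v - 1 \<in> F \<and> Suc v \<in> F)"
    proof (intro ballI notI)
      fix v
      assume "v \<in> F" "0 < v \<and> v - 1 \<in> F \<and> Suc v \<in> F"
      then have "{v - 1, Suc (v - 1), Suc (Suc (v - 1))} \<subseteq> F"
        by simp
      with \<open>triple_free F\<close> show False
        unfolding triple_free_def by blast
    qed
  qed
  then show ?thesis
    unfolding dissociation_set_def card_path_neighbours_le_1 by simp
qed

definition path_maximal :: "nat \<Rightarrow> nat set \<Rightarrow> bool" where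
  "path_maximal n F \<longleftrightarrow> F \<subseteq> {0..<n} \<and> triple_free F \<and>
     (\<forall>v<n. v \<notin> F \<longrightarrow> \<not> triple_free (insert v F))"

lemma maximal_dissociation_set_path_iff:
  "maximal_dissociation_set {0..<n} path_adj F \<longleftrightarrow> path_maximal n F"
proof
  assume max: "maximal_dissociation_set {0..<n} path_adj F"
  then have "F \<subseteq> {0..<n}" "triple_free F"
    by (auto simp: maximal_dissociation_set_def dissociation_set_path_iff)
  moreover have "\<not> triple_free (insert v F)" if "v < n" "v \<notin> F" for v
  proof
    assume "triple_free (insert v F)"
    with \<open>F \<subseteq> {0..<n}\<close> \<open>v < n\<close> have "dissociation_set {0..<n} path_adj (insert v F)"
      by (simp add: dissociation_set_path_iff)
    with max \<open>v \<notin> F\<close> show False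
      by (auto simp: maximal_dissociation_set_def)
  qed
  ultimately show "path_maximal n F"
    by (simp add: path_maximal_def)
next
  assume max: "path_maximal n F"
  have "F' = F" if "dissociation_set {0..<n} path_adj F'" "F \<subseteq> F'" for F'
  proof (rule ccontr)
    assume "F' \<noteq> F"
    with \<open>F \<subseteq> F'\<close> obtain v where "v \<in> F'" "v \<notin> F" by blast
    moreover have "F' \<subseteq> {0..<n}" "triple_free F'"
      using that(1) by (auto simp: dissociation_set_path_iff)
    ultimately show False
      using max \<open>F \<subseteq> F'\<close> triple_free_subset[of F' "insert v F"]
      by (auto simp: path_maximal_def)
  qed
  with max show "maximal_dissociation_set {0..<n} path_adj F"
    by (auto simp: maximal_dissociation_set_def dissociation_set_path_iff path_maximal_def)
qed

lemma path_maximal_subset: "path_maximal n F \<Longrightarrow> F \<subseteq> {0..<n}"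
  by (simp add: path_maximal_def)

lemma path_maximal_blocking_triple:
  assumes "path_maximal n F" "v < n" "v \<notin> F"
  obtains w where "w \<le> v" "v \<le> Suc (Suc w)" "Suc (Suc w) < n"
    "{w, Suc w, Suc (Suc w)} \<subseteq> insert v F"
proof -
  from assms obtain w where w: "{w, Suc w, Suc (Suc w)} \<subseteq> insert v F"
    unfolding path_maximal_def triple_free_def by blast
  with assms have "v \<in> {w, Suc w, Suc (Suc w)}"
    by (auto simp: path_maximal_def triple_free_def)
  then have "w \<le> v" "v \<le> Suc (Suc w)"
    by auto
  moreover have "Suc (Suc w) < n"
    using w assms by (auto simp: path_maximal_def)
  ultimately show thesis
    using that w by blast
qed

lemma path_maximal_restrict:
  assumes max: "path_maximal n F" and "m \<le> n" "m \<notin> F"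
  shows "path_maximal m (F \<inter> {0..<m})"
proof -
  have "\<not> triple_free (insert v (F \<inter> {0..<m}))" if v: "v < m" "v \<notin> F \<inter> {0..<m}" for v
  proof -
    obtain w where w: "w \<le> v" "v \<le> Suc (Suc w)" "Suc (Suc w) < n"
        "{w, Suc w, Suc (Suc w)} \<subseteq> insert v F"
      using path_maximal_blocking_triple[OF max, of v] v \<open>m \<le> n\<close> by auto
    have "m \<notin> {w, Suc w, Suc (Suc w)}"
      using w(4) \<open>m \<notin> F\<close> \<open>v < m\<close> by auto
    with w(1) \<open>v < m\<close> have "Suc (Suc w) < m"
      by auto
    with w(4) have "{w, Suc w, Suc (Suc w)} \<subseteq> insert v (F \<inter> {0..<m})"
      by auto
    then show ?thesis
      unfolding triple_free_def by blast
  qed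
  with max show ?thesis
    by (auto simp: path_maximal_def intro: triple_free_subset)
qed

definition max_sets :: "nat \<Rightarrow> nat set set" where
  "max_sets n = {F. path_maximal n F}"

definition end_gap :: "nat \<Rightarrow> nat set set" where
  "end_gap n = {F \<in> max_sets n. n - 1 \<notin> F}"

definition end_single :: "nat \<Rightarrow> nat set set" where
  "end_single n = {F \<in> max_sets n. n - 1 \<in> F \<and> n - 2 \<notin> F}"

definition end_pair :: "nat \<Rightarrow> nat set set" where
  "end_pair n = {F \<in> max_sets n. n - 1 \<in> F \<and> n - 2 \<in> F}"

lemma finite_max_sets: "finite (max_sets n)"
proof -
  have "max_sets n \<subseteq> Pow {0..<n}"
    by (auto simp: max_sets_def path_maximal_def)
  then show ?thesis
    by (rule finite_subset) simp
qed

lemma card_max_sets_le_end_classes: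
  "card (max_sets n) \<le> card (end_gap n) + card (end_single n) + card (end_pair n)"
proof -
  have "max_sets n = end_gap n \<union> end_single n \<union> end_pair n"
    by (auto simp: end_gap_def end_single_def end_pair_def)
  then show ?thesis
    by (metis card_Un_le add_le_mono1 order_trans)
qed

lemma max_sets_small_subset: "n \<le> 2 \<Longrightarrow> max_sets n \<subseteq> {{0..<n}}"
proof
  fix F
  assume "n \<le> 2" "F \<in> max_sets n"
  then have max: "path_maximal n F"
    by (simp add: max_sets_def)
  have "v \<in> F" if "v < n" for v
  proof (rule ccontr)
    assume "v \<notin> F"
    with max \<open>v < n\<close> \<open>n \<le> 2\<close> show False
      by (auto elim: path_maximal_blocking_triple)
  qed
  with max show "F \<in> {{0..<n}}"
    by (auto simp: path_maximal_def)
qed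

lemma end_gap_subset: "end_gap (Suc (Suc (Suc n))) \<subseteq> end_pair (Suc (Suc n))"
proof
  fix F
  assume "F \<in> end_gap (Suc (Suc (Suc n)))"
  then have max: "path_maximal (Suc (Suc (Suc n))) F" and gap: "Suc (Suc n) \<notin> F"
    by (auto simp: end_gap_def max_sets_def)
  obtain w where w: "w \<le> Suc (Suc n)" "Suc (Suc n) \<le> Suc (Suc w)" "Suc (Suc w) < Suc (Suc (Suc n))"
      "{w, Suc w, Suc (Suc w)} \<subseteq> insert (Suc (Suc n)) F"
    using path_maximal_blocking_triple[OF max _ gap] by auto
  from w(1-3) have "w = n"
    by simp
  with w(4) have "n \<in> F" "Suc n \<in> F"
    by simp_all
  moreover have "F \<inter> {0..<Suc (Suc n)} = F"
    using path_maximal_subset[OF max] gap unfolding atLeastLessThanSuc by auto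
  moreover have "path_maximal (Suc (Suc n)) (F \<inter> {0..<Suc (Suc n)})"
    using path_maximal_restrict[OF max _ gap] by simp
  ultimately show "F \<in> end_pair (Suc (Suc n))"
    by (simp add: end_pair_def max_sets_def)
qed

lemma card_end_single_le:
  "card (end_single (Suc (Suc (Suc n)))) \<le> card (end_single (Suc n)) + card (end_pair (Suc n))"
proof -
  let ?restrict = "\<lambda>F. F \<inter> {0..<Suc n}"
  have shape: "F = insert (Suc (Suc n)) (?restrict F)" if "F \<in> end_single (Suc (Suc (Suc n)))" for F
    using that unfolding end_single_def max_sets_def path_maximal_def atLeastLessThanSuc by auto
  have "?restrict F \<in> end_single (Suc n) \<union> end_pair (Suc n)"
    if "F \<in> end_single (Suc (Suc (Suc n)))" for F
  proof -
    from that have max: "path_maximal (Suc (Suc (Suc n))) F" and gap: "Suc n \<notin> F"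
      by (auto simp: end_single_def max_sets_def)
    obtain w where w: "w \<le> Suc n" "Suc n \<le> Suc (Suc w)" "Suc (Suc w) < Suc (Suc (Suc n))"
        "{w, Suc w, Suc (Suc w)} \<subseteq> insert (Suc n) F"
      using path_maximal_blocking_triple[OF max _ gap] by auto
    from w(1-3) have "n \<in> {w, Suc w, Suc (Suc w)}"
      by auto
    with w(4) have "n \<in> ?restrict F"
      by auto
    moreover have "path_maximal (Suc n) (?restrict F)"
      using path_maximal_restrict[OF max _ gap] by simp
    ultimately show ?thesis
      by (auto simp: end_single_def end_pair_def max_sets_def)
  qed
  moreover have "inj_on ?restrict (end_single (Suc (Suc (Suc n))))"
    by (rule inj_on_inverseI[where g = "insert (Suc (Suc n))"]) (simp add: shape[symmetric])
  ultimately have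
    "card (end_single (Suc (Suc (Suc n)))) \<le> card (end_single (Suc n) \<union> end_pair (Suc n))"
    by (intro card_inj_on_le)
      (auto simp: end_single_def end_pair_def intro: finite_subset[OF _ finite_max_sets])
  also have "\<dots> \<le> card (end_single (Suc n)) + card (end_pair (Suc n))"
    by (rule card_Un_le)
  finally show ?thesis .
qed

lemma card_end_pair_le: "card (end_pair (Suc (Suc (Suc n)))) \<le> card (max_sets n)"
proof -
  let ?restrict = "\<lambda>F. F \<inter> {0..<n}"
  have gap: "n \<notin> F" if "F \<in> end_pair (Suc (Suc (Suc n)))" for F
    using that unfolding end_pair_def max_sets_def path_maximal_def triple_free_def by auto
  have shape: "F = insert (Suc n) (insert (Suc (Suc n)) (?restrict F))"
    if "F \<in> end_pair (Suc (Suc (Suc n)))" for F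
    using that gap[OF that]
    unfolding end_pair_def max_sets_def path_maximal_def atLeastLessThanSuc by auto
  have img: "?restrict ` end_pair (Suc (Suc (Suc n))) \<subseteq> max_sets n"
    using path_maximal_restrict[OF _ _ gap] by (auto simp: end_pair_def max_sets_def)
  have inj: "inj_on ?restrict (end_pair (Suc (Suc (Suc n))))"
    by (rule inj_on_inverseI[where g = "\<lambda>G. insert (Suc n) (insert (Suc (Suc n)) G)"])
      (simp add: shape[symmetric])
  show ?thesis
    by (rule card_inj_on_le[OF inj img finite_max_sets])
qed

(* gap_bound 0 = 1 because end_gap 0 = {{}}: with truncated subtraction 0 - 1 = 0 is not in {}. *)
fun gap_bound :: "nat \<Rightarrow> nat" and single_bound :: "nat \<Rightarrow> nat" and pair_bound :: "nat \<Rightarrow> nat"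
  where
  "gap_bound 0 = 1"
| "gap_bound (Suc 0) = 0"
| "gap_bound (Suc (Suc 0)) = 0"
| "gap_bound (Suc (Suc (Suc n))) = pair_bound (Suc (Suc n))"
| "single_bound (Suc (Suc (Suc n))) = single_bound (Suc n) + pair_bound (Suc n)"
| "single_bound _ = 0"
| "pair_bound 0 = 0"
| "pair_bound (Suc (Suc (Suc n))) = gap_bound n + single_bound n + pair_bound n"
| "pair_bound _ = 1"

lemma card_end_classes_le:
  "card (end_gap n) \<le> gap_bound n \<and> card (end_single n) \<le> single_bound n \<and>
   card (end_pair n) \<le> pair_bound n"
proof (induction n rule: less_induct)
  case (less n)
  show ?case
  proof (cases "n \<le> 2")
    case True
    have "card A \<le> 1" if "A \<subseteq> max_sets n" for A
      using card_mono[OF _ subset_trans[OF that max_sets_small_subset[OF True]]] by simp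
    moreover have "end_gap n \<subseteq> max_sets n" "end_single n \<subseteq> max_sets n" "end_pair n \<subseteq> max_sets n"
      by (auto simp: end_gap_def end_single_def end_pair_def)
    moreover have "end_gap n = {}" if "0 < n"
      using that True max_sets_small_subset[OF True] by (auto simp: end_gap_def)
    moreover have "end_single n = {}" "end_pair 0 = {}"
      using True max_sets_small_subset[OF True] max_sets_small_subset[of 0]
      by (auto simp: end_single_def end_pair_def)
    ultimately show ?thesis
      using True by (auto simp: le_Suc_eq numeral_2_eq_2)
  next
    case False
    then obtain m where n: "n = Suc (Suc (Suc m))"
      by (intro that[of "n - 3"]) auto
    have IH: "card (end_gap k) \<le> gap_bound k" "card (end_single k) \<le> single_bound k"
      "card (end_pair k) \<le> pair_bound k" if "k < n" for k
      using less that by auto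
    have "card (end_gap n) \<le> card (end_pair (Suc (Suc m)))"
      unfolding n by (intro card_mono end_gap_subset)
        (auto simp: end_pair_def intro: finite_subset[OF _ finite_max_sets])
    also have "\<dots> \<le> gap_bound n"
      using IH(3)[of "Suc (Suc m)"] n by simp
    finally have "card (end_gap n) \<le> gap_bound n" .
    moreover have "card (end_single n) \<le> single_bound n"
      using card_end_single_le[of m] IH(2,3)[of "Suc m"] n by simp
    moreover have "card (end_pair n) \<le> pair_bound n"
      using card_end_pair_le[of m] card_max_sets_le_end_classes[of m] IH[of m] n by simp
    ultimately show ?thesis
      by blast
  qed
qed

lemma bounds_le_power:
  "4 \<le> n \<Longrightarrow> real (gap_bound n) \<le> (39/25) ^ n / 4 \<and>
     real (single_bound n) \<le> (39/25) ^ n / 4 \<and> real (pair_bound n) \<le> (39/25) ^ n / 4"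
proof (induction n rule: less_induct)
  case (less n)
  show ?case
  proof (cases "n \<le> 6")
    case True
    with less.prems have "n = 4 \<or> n = 5 \<or> n = 6"
      by auto
    then show ?thesis
      by (auto simp: numeral_eq_Suc)
  next
    case False
    then obtain m where n: "n = Suc (Suc (Suc m))" and "4 \<le> m"
      by (intro that[of "n - 3"]) auto
    let ?\<mu> = "39/25 :: real"
    have IH: "real (gap_bound k) \<le> ?\<mu> ^ k / 4" "real (single_bound k) \<le> ?\<mu> ^ k / 4"
      "real (pair_bound k) \<le> ?\<mu> ^ k / 4" if "4 \<le> k" "k < n" for k
      using less.IH that by auto
    have "real (gap_bound n) \<le> ?\<mu> ^ (m + 2) / 4"
      using IH(3)[of "m + 2"] \<open>4 \<le> m\<close> n by simp
    also have "\<dots> \<le> ?\<mu> ^ n / 4"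
      unfolding n by (simp add: power_increasing)
    finally have "real (gap_bound n) \<le> ?\<mu> ^ n / 4" .
    moreover have "real (single_bound n) \<le> 2 * ?\<mu> ^ (m + 1) / 4"
      using IH(2,3)[of "m + 1"] \<open>4 \<le> m\<close> n by simp
    moreover have "2 * ?\<mu> ^ (m + 1) \<le> ?\<mu> ^ n"
      unfolding n by simp
    moreover have "real (pair_bound n) \<le> 3 * ?\<mu> ^ m / 4"
      using IH[of m] \<open>4 \<le> m\<close> n by simp
    moreover have "3 * ?\<mu> ^ m \<le> ?\<mu> ^ n"
      unfolding n by simp
    ultimately show ?thesis
      by linarith
  qed
qed

lemma card_max_sets_le_bounds: "card (max_sets n) \<le> gap_bound n + single_bound n + pair_bound n"
  using card_max_sets_le_end_classes[of n] card_end_classes_le[of n] by linarith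

lemma sum_bounds_less_power:
  assumes "0 < n"
  shows "real (gap_bound n + single_bound n + pair_bound n) < 0.81 * (39/25) ^ n"
proof (cases "n \<le> 3")
  case True
  with assms have "n = 1 \<or> n = 2 \<or> n = 3"
    by auto
  then show ?thesis
    by (auto simp: numeral_eq_Suc)
next
  case False
  then have "real (gap_bound n + single_bound n + pair_bound n) \<le> 3 * ((39/25) ^ n / 4)"
    using bounds_le_power[of n] by simp
  also have "\<dots> < 0.81 * (39/25) ^ n"
    by simp
  finally show ?thesis .
qed

lemma power_39_25_le_6_powr: "(39/25 :: real) ^ n \<le> 6 powr (real n / 4)"
proof -
  have "(39/25 :: real) ^ n = (39/25) powr (4 * (real n / 4))"
    by (simp add: powr_realpow)
  also have "\<dots> = ((39/25) powr 4) powr (real n / 4)"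
    by (rule powr_powr[symmetric])
  also have "\<dots> \<le> 6 powr (real n / 4)"
    by (rule powr_mono2) (simp_all add: eval_nat_numeral)
  finally show ?thesis .
qed

theorem lemma2p5:
  fixes n :: nat
  assumes "n \<ge> 1"
  shows "real (num_max_dissociation_sets (path_vertices n) path_adj) < 0.81 * 6 powr (real n / 4)"
proof -
  have "num_max_dissociation_sets (path_vertices n) path_adj = card (max_sets n)"
    by (simp add: num_max_dissociation_sets_def path_vertices_def max_sets_def
        maximal_dissociation_set_path_iff)
  also have "\<dots> \<le> gap_bound n + single_bound n + pair_bound n"
    by (rule card_max_sets_le_bounds)
  finally have "real (num_max_dissociation_sets (path_vertices n) path_adj)
      \<le> real (gap_bound n + single_bound n + pair_bound n)"
    by simp
  also have "\<dots> < 0.81 * (39/25) ^ n"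
    using sum_bounds_less_power assms by simp
  also have "\<dots> \<le> 0.81 * 6 powr (real n / 4)"
    using power_39_25_le_6_powr by simp
  finally show ?thesis .
qed

end
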